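(* Let $n$ be a positive integer, $1\le k\le n+1$, and let $F_k$ be a (directed or undirected) $k$-profile on $[n]\cup\{0,n+1\}$. Then: (1) there are positions $q_1,q_n$ such that in every permutation of $[n]\cup\{0,n+1\}$ whose (directed, resp. undirected) $k$-profile is $F_k$, the element $1$ is at position $q_1$ and the element $n$ is at position $q_n$; (2) with $l=\min\{q_1,q_n\}$ and $r=\max\{q_1,q_n\}$, the sets $X$, $Y$, $Z$ of elements located strictly between positions $0$ and $l$, strictly between positions $l$ and $r$, and strictly between positions $r$ and $n+1$, respectively, are the same for all permutations whose $k$-profile is $F_k$.
   Context: $[n]=\{1,\dots,n\}$. Permutations are of $[n]\cup\{0,n+1\}$, positions numbered $0,\dots,n+1$, always with $0$ at position $0$ and $n+1$ at position $n+1$. For a permutation $P$ and elements $t<t+i$, let $\min_{t,t+i}$ and $\max_{t,t+i}$ be the minimum and maximum of the elements located on $P$ in the interval delimited by the element $t$ (included) and the element $t+i$ (included). The $k$-profile of $P$ is the set $\{(t,t+i,[\min_{t,t+i},\max_{t,t+i}]) : 1\le i\le k,\ 0\le t\le n+1-i\}$; the directed $k$-profile additionally records, for each such pair, whether $t$ is left or right of $t+i$ in $P$. A ($k$-)profile $F_k$ is any set of constraints of this form (for general integers in place of the min and max); the claim concerns all permutations whose $k$-profile equals $F_k$ (possibly none). *)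

theory Defs
  imports Main
begin

text \<open>A permutation of [n] \<union> {0,n+1} is represented by the map from positions to
elements, P :: nat \<Rightarrow> nat, a bijection of {0..n+1} with P 0 = 0 and P (n+1) = n+1.\<close>

definition fixed_perm :: "nat \<Rightarrow> (nat \<Rightarrow> nat) \<Rightarrow> bool" where
  "fixed_perm n P \<longleftrightarrow> bij_betw P {0..n+1} {0..n+1} \<and> P 0 = 0 \<and> P (n+1) = n+1"

definition pos_of :: "nat \<Rightarrow> (nat \<Rightarrow> nat) \<Rightarrow> nat \<Rightarrow> nat" where
  "pos_of n P x = inv_into {0..n+1} P x"

definition elems_between :: "nat \<Rightarrow> (nat \<Rightarrow> nat) \<Rightarrow> nat \<Rightarrow> nat \<Rightarrow> nat set" where
  "elems_between n P a b =
     P ` {min (pos_of n P a) (pos_of n P b) .. max (pos_of n P a) (pos_of n P b)}"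

definition kprofile :: "bool \<Rightarrow> nat \<Rightarrow> nat \<Rightarrow> (nat \<Rightarrow> nat) \<Rightarrow>
    (nat \<times> nat \<times> (nat \<times> nat) \<times> bool option) set" where
  "kprofile directed k n P =
     {(t, t + i, (Min (elems_between n P t (t+i)), Max (elems_between n P t (t+i))),
       if directed then Some (pos_of n P t < pos_of n P (t+i)) else None)
      | t i. 1 \<le> i \<and> i \<le> k \<and> t + i \<le> n + 1}"

end

theory Submission
  imports Defs
begin

text \<open>Already the consecutive pairs (t, t+1) of the profile suffice. For 2 \<le> t \<le> n the minimum
  of the stretch of P delimited by t and t+1 is 1 exactly when 1 lies strictly inside it, i.e.
  when t and t+1 lie on different sides of 1 (0 and n+1, sitting at the ends, never lie inside).
  Since n+1 is right of 1, walking down from n+1 the profile fixes, for every element, on which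
  side of 1 it lies; symmetrically the maxima fix the side of n, walking up from 0, which is left
  of n. The position of 1 (of n) is the number of elements to its left, and X, Y, Z are Boolean
  combinations of the sets of elements left of 0, 1, n and n+1.\<close>

lemma fixed_perm_pos_of:
  assumes "fixed_perm n P"
  shows pos_of_le: "x \<le> n+1 \<Longrightarrow> pos_of n P x \<le> n+1"
    and P_pos_of: "x \<le> n+1 \<Longrightarrow> P (pos_of n P x) = x"
    and pos_of_P: "p \<le> n+1 \<Longrightarrow> pos_of n P (P p) = p"
    and P_le: "p \<le> n+1 \<Longrightarrow> P p \<le> n+1"
    and pos_of_zero: "pos_of n P 0 = 0"
    and pos_of_last: "pos_of n P (n+1) = n+1"
proof -
  have bij: "bij_betw P {0..n+1} {0..n+1}" and "P 0 = 0" "P (n+1) = n+1"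
    using assms unfolding fixed_perm_def by auto
  show "x \<le> n+1 \<Longrightarrow> pos_of n P x \<le> n+1"
    using bij_betw_inv_into[OF bij] unfolding pos_of_def by (auto dest: bij_betwE)
  show "x \<le> n+1 \<Longrightarrow> P (pos_of n P x) = x"
    using bij unfolding pos_of_def by (simp add: bij_betw_inv_into_right)
  show "p \<le> n+1 \<Longrightarrow> P p \<le> n+1"
    using bij by (auto dest: bij_betwE)
  show pos_P: "p \<le> n+1 \<Longrightarrow> pos_of n P (P p) = p" for p
    using bij unfolding pos_of_def by (simp add: bij_betw_inv_into_left)
  show "pos_of n P 0 = 0" "pos_of n P (n+1) = n+1"
    using pos_P[of 0] pos_P[of "n+1"] \<open>P 0 = 0\<close> \<open>P (n+1) = n+1\<close> by simp_all
qed

lemma pos_of_eq_iff: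
  assumes "fixed_perm n P" "x \<le> n+1" "y \<le> n+1"
  shows "pos_of n P x = pos_of n P y \<longleftrightarrow> x = y"
  using P_pos_of[OF assms(1)] assms(2,3) by metis

lemma pos_of_gt_zero:
  assumes "fixed_perm n P" "1 \<le> x" "x \<le> n+1"
  shows "0 < pos_of n P x"
  using pos_of_eq_iff[OF assms(1), of x 0] pos_of_zero[OF assms(1)] assms(2,3) by simp

lemma pos_of_less_last:
  assumes "fixed_perm n P" "x \<le> n"
  shows "pos_of n P x < n+1"
  using pos_of_eq_iff[OF assms(1), of x "n+1"] pos_of_last[OF assms(1)] pos_of_le[OF assms(1), of x]
    assms(2) by simp

lemma image_eq_pos_of:
  assumes "fixed_perm n P" "A \<subseteq> {0..n+1}"
  shows "P ` A = {x. x \<le> n+1 \<and> pos_of n P x \<in> A}"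
proof
  show "P ` A \<subseteq> {x. x \<le> n+1 \<and> pos_of n P x \<in> A}"
    using assms(2) pos_of_P[OF assms(1)] P_le[OF assms(1)] by auto
  show "{x. x \<le> n+1 \<and> pos_of n P x \<in> A} \<subseteq> P ` A"
    using P_pos_of[OF assms(1)] by (auto intro: rev_image_eqI)
qed

lemma elems_between_eq:
  assumes "fixed_perm n P" "t \<le> n+1" "u \<le> n+1"
  shows "elems_between n P t u = {x. x \<le> n+1 \<and>
    pos_of n P x \<in> {min (pos_of n P t) (pos_of n P u) .. max (pos_of n P t) (pos_of n P u)}}"
proof -
  have "max (pos_of n P t) (pos_of n P u) \<le> n+1"
    using pos_of_le[OF assms(1)] assms(2,3) by simp
  then show ?thesis
    unfolding elems_between_def by (intro image_eq_pos_of[OF assms(1)]) auto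
qed

lemma mem_elems_between_iff:
  assumes "fixed_perm n P" "t \<le> n+1" "u \<le> n+1" "z \<le> n+1" "z \<noteq> t" "z \<noteq> u"
  shows "z \<in> elems_between n P t u \<longleftrightarrow>
    (pos_of n P t < pos_of n P z) \<noteq> (pos_of n P u < pos_of n P z)"
proof -
  have "pos_of n P z \<noteq> pos_of n P t" "pos_of n P z \<noteq> pos_of n P u"
    using pos_of_eq_iff[OF assms(1)] assms(2-6) by auto
  then show ?thesis
    unfolding elems_between_eq[OF assms(1-3)] using assms(4) by (auto simp: min_def max_def)
qed

lemma elems_between_facts:
  assumes "fixed_perm n P" "t \<le> n+1" "u \<le> n+1"
  shows elems_between_subset: "elems_between n P t u \<subseteq> {0..n+1}"
    and finite_elems_between: "finite (elems_between n P t u)"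
    and elems_between_nonempty: "t \<in> elems_between n P t u"
proof -
  show "elems_between n P t u \<subseteq> {0..n+1}"
    unfolding elems_between_eq[OF assms] by auto
  then show "finite (elems_between n P t u)" by (rule finite_subset) simp
  show "t \<in> elems_between n P t u"
    unfolding elems_between_eq[OF assms] using assms(2) by simp
qed

lemma Min_elems_between_eq_1_iff:
  assumes "fixed_perm n P" "1 \<le> t" "t \<le> n+1" "1 \<le> u" "u \<le> n+1"
  shows "Min (elems_between n P t u) = 1 \<longleftrightarrow> 1 \<in> elems_between n P t u"
proof -
  have "0 \<notin> elems_between n P t u"
    using mem_elems_between_iff[OF assms(1,3,5), of 0] pos_of_zero[OF assms(1)] assms(2,4) by simp
  then have "\<forall>x \<in> elems_between n P t u. 1 \<le> x"
    by (metis One_nat_def Suc_leI gr0I)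
  moreover have "elems_between n P t u \<noteq> {}"
    using elems_between_nonempty[OF assms(1,3,5)] by blast
  ultimately show ?thesis
    by (simp add: Min_eq_iff finite_elems_between[OF assms(1,3,5)])
qed

lemma Max_elems_between_eq_n_iff:
  assumes "fixed_perm n P" "t \<le> n" "u \<le> n"
  shows "Max (elems_between n P t u) = n \<longleftrightarrow> n \<in> elems_between n P t u"
proof -
  have tu: "t \<le> n+1" "u \<le> n+1" using assms(2,3) by simp_all
  have "pos_of n P t < n+1" "pos_of n P u < n+1"
    using pos_of_less_last[OF assms(1)] assms(2,3) by simp_all
  then have "n+1 \<notin> elems_between n P t u"
    using mem_elems_between_iff[OF assms(1) tu, of "n+1"] pos_of_last[OF assms(1)] assms(2,3) by simp
  then have "\<forall>x \<in> elems_between n P t u. x \<le> n"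
    using elems_between_subset[OF assms(1) tu] by (force simp: le_Suc_eq)
  moreover have "elems_between n P t u \<noteq> {}"
    using elems_between_nonempty[OF assms(1) tu] by blast
  ultimately show ?thesis
    by (simp add: Max_eq_iff finite_elems_between[OF assms(1) tu])
qed

lemma kprofile_eq_imp_Min_Max_eq:
  assumes "kprofile d k n P = kprofile d k n P'" "1 \<le> k" "t \<le> n"
  shows "Min (elems_between n P t (t+1)) = Min (elems_between n P' t (t+1))"
    and "Max (elems_between n P t (t+1)) = Max (elems_between n P' t (t+1))"
proof -
  have "(t, t+1, (Min (elems_between n P t (t+1)), Max (elems_between n P t (t+1))),
       if d then Some (pos_of n P t < pos_of n P (t+1)) else None) \<in> kprofile d k n P'"
    unfolding assms(1)[symmetric] unfolding kprofile_def using assms(2,3)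
    by (intro CollectI exI[of _ t] exI[of _ 1]) simp
  then show "Min (elems_between n P t (t+1)) = Min (elems_between n P' t (t+1))"
    and "Max (elems_between n P t (t+1)) = Max (elems_between n P' t (t+1))"
    unfolding kprofile_def by auto
qed

lemma same_flips_imp_agreement_const:
  fixes f g :: "nat \<Rightarrow> bool"
  assumes flips: "\<And>m. a \<le> m \<Longrightarrow> m < b \<Longrightarrow> (f m \<noteq> f (Suc m)) = (g m \<noteq> g (Suc m))"
    and "a \<le> x" "x \<le> b" "a \<le> y" "y \<le> b"
  shows "(f x = g x) = (f y = g y)"
proof -
  have "(f x = g x) = (f a = g a)" if "a \<le> x" "x \<le> b" for x
    using that(1,2)
  proof (induction x rule: dec_induct)
    case (step m)
    then show ?case using flips[of m] by auto
  qed simp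
  then show ?thesis using assms(2-5) by blast
qed

definition elems_left_of :: "nat \<Rightarrow> (nat \<Rightarrow> nat) \<Rightarrow> nat \<Rightarrow> nat set" where
  "elems_left_of n P z = {x. x \<le> n+1 \<and> pos_of n P x < pos_of n P z}"

lemma elems_left_of_zero: "fixed_perm n P \<Longrightarrow> elems_left_of n P 0 = {}"
  unfolding elems_left_of_def by (simp add: pos_of_zero)

lemma elems_left_of_last:
  assumes "fixed_perm n P"
  shows "elems_left_of n P (n+1) = {..n}"
proof -
  have "pos_of n P x < n+1 \<longleftrightarrow> x \<noteq> n+1" if "x \<le> n+1" for x
    using pos_of_le[OF assms that] pos_of_eq_iff[OF assms that, of "n+1"] pos_of_last[OF assms]
    by auto
  then have "elems_left_of n P (n+1) = {x. x \<le> n+1 \<and> x \<noteq> n+1}"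
    unfolding elems_left_of_def pos_of_last[OF assms] by blast
  also have "\<dots> = {..n}" by auto
  finally show ?thesis .
qed

lemma pos_of_eq_card_elems_left_of:
  assumes "fixed_perm n P" "z \<le> n+1"
  shows "pos_of n P z = card (elems_left_of n P z)"
proof -
  have "elems_left_of n P z = P ` {..<pos_of n P z}"
    unfolding elems_left_of_def using pos_of_le[OF assms]
    by (subst image_eq_pos_of[OF assms(1)]) auto
  moreover have "inj_on P {..<pos_of n P z}"
  proof (rule inj_on_subset)
    show "inj_on P {0..n+1}" using assms(1) bij_betw_imp_inj_on unfolding fixed_perm_def by blast
    show "{..<pos_of n P z} \<subseteq> {0..n+1}" using pos_of_le[OF assms] by auto
  qed
  ultimately show ?thesis by (simp add: card_image)
qed

lemma image_pos_of_interval: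
  assumes "fixed_perm n P" "a \<le> n+1" "b \<le> n+1"
  shows "P ` {pos_of n P a<..<pos_of n P b} = elems_left_of n P b - elems_left_of n P a - {a}"
proof -
  have "P ` {pos_of n P a<..<pos_of n P b} =
      {x. x \<le> n+1 \<and> pos_of n P x \<in> {pos_of n P a<..<pos_of n P b}}"
    using pos_of_le[OF assms(1,3)] by (intro image_eq_pos_of[OF assms(1)]) auto
  moreover have "pos_of n P a < pos_of n P x \<longleftrightarrow> \<not> pos_of n P x < pos_of n P a \<and> x \<noteq> a"
    if "x \<le> n+1" for x
    using pos_of_eq_iff[OF assms(1) that assms(2)] by auto
  ultimately show ?thesis
    unfolding elems_left_of_def by (intro set_eqI) (simp, blast)
qed

lemma kprofile_determines_elems_left_of_1:
  assumes P: "fixed_perm n P" and P': "fixed_perm n P'"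
    and pr: "kprofile d k n P = kprofile d k n P'" and "1 \<le> k" "1 \<le> n"
  shows "elems_left_of n P 1 = elems_left_of n P' 1"
proof -
  let ?f = "\<lambda>x. pos_of n P x < pos_of n P 1" and ?g = "\<lambda>x. pos_of n P' x < pos_of n P' 1"
  have flips: "(?f m \<noteq> ?f (Suc m)) = (?g m \<noteq> ?g (Suc m))" if "2 \<le> m" "m < n+1" for m
    using kprofile_eq_imp_Min_Max_eq(1)[OF pr \<open>1 \<le> k\<close>, of m] that
      Min_elems_between_eq_1_iff[OF P, of m "m+1"] Min_elems_between_eq_1_iff[OF P', of m "m+1"]
      mem_elems_between_iff[OF P, of m "m+1" 1] mem_elems_between_iff[OF P', of m "m+1" 1]
    by simp
  have in1: "0 < pos_of n P 1" "pos_of n P 1 < n+1" "0 < pos_of n P' 1" "pos_of n P' 1 < n+1"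
    using pos_of_gt_zero[OF P] pos_of_gt_zero[OF P'] pos_of_less_last[OF P] pos_of_less_last[OF P']
      \<open>1 \<le> n\<close> by simp_all
  have last: "?f (n+1) = ?g (n+1)"
    using pos_of_last[OF P] pos_of_last[OF P'] in1 by simp
  have "?f x = ?g x" if x: "x \<le> n+1" for x
  proof -
    consider "x = 0" | "x = 1" | "2 \<le> x" by linarith
    then show ?thesis
    proof cases
      case 1
      then show ?thesis using pos_of_zero[OF P] pos_of_zero[OF P'] in1 by simp
    next
      case 3
      then show ?thesis
        using same_flips_imp_agreement_const[of 2 "n+1" ?f ?g x "n+1"] flips last x
          \<open>1 \<le> n\<close> by simp
    qed simp
  qed
  then show ?thesis unfolding elems_left_of_def by blast
qed

lemma kprofile_determines_elems_left_of_n: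
  assumes P: "fixed_perm n P" and P': "fixed_perm n P'"
    and pr: "kprofile d k n P = kprofile d k n P'" and "1 \<le> k" "1 \<le> n"
  shows "elems_left_of n P n = elems_left_of n P' n"
proof -
  let ?f = "\<lambda>x. pos_of n P x < pos_of n P n" and ?g = "\<lambda>x. pos_of n P' x < pos_of n P' n"
  have flips: "(?f m \<noteq> ?f (Suc m)) = (?g m \<noteq> ?g (Suc m))" if "m < n-1" for m
    using kprofile_eq_imp_Min_Max_eq(2)[OF pr \<open>1 \<le> k\<close>, of m] that
      Max_elems_between_eq_n_iff[OF P, of m "m+1"] Max_elems_between_eq_n_iff[OF P', of m "m+1"]
      mem_elems_between_iff[OF P, of m "m+1" n] mem_elems_between_iff[OF P', of m "m+1" n]
    by simp
  have inn: "0 < pos_of n P n" "pos_of n P n < n+1" "0 < pos_of n P' n" "pos_of n P' n < n+1"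
    using pos_of_gt_zero[OF P] pos_of_gt_zero[OF P'] pos_of_less_last[OF P] pos_of_less_last[OF P']
      \<open>1 \<le> n\<close> by simp_all
  have first: "?f 0 = ?g 0"
    using pos_of_zero[OF P] pos_of_zero[OF P'] inn by simp
  have "?f x = ?g x" if x: "x \<le> n+1" for x
  proof -
    consider "x \<le> n-1" | "x = n" | "x = n+1" using x by linarith
    then show ?thesis
    proof cases
      case 1
      then show ?thesis
        using same_flips_imp_agreement_const[of 0 "n-1" ?f ?g x 0] flips first by simp
    next
      case 3
      then show ?thesis using pos_of_last[OF P] pos_of_last[OF P'] inn by simp
    qed simp
  qed
  then show ?thesis unfolding elems_left_of_def by blast
qed

lemma kprofile_determines_elems_left_of_landmarks:
  assumes P: "fixed_perm n P" and P': "fixed_perm n P'"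
    and pr: "kprofile d k n P = kprofile d k n P'" and "1 \<le> k" "1 \<le> n"
    and z: "z \<in> {0, 1, n, n+1}"
  shows "elems_left_of n P z = elems_left_of n P' z"
  using z kprofile_determines_elems_left_of_1[OF assms(1-5)]
    kprofile_determines_elems_left_of_n[OF assms(1-5)]
    elems_left_of_zero[OF P] elems_left_of_zero[OF P'] elems_left_of_last[OF P] elems_left_of_last[OF P']
  by blast

lemma kprofile_determines_pos_of_landmarks:
  assumes "fixed_perm n P" "fixed_perm n P'" "kprofile d k n P = kprofile d k n P'" "1 \<le> k" "1 \<le> n"
    and z: "z \<in> {0, 1, n, n+1}"
  shows "pos_of n P z = pos_of n P' z"
proof -
  have "z \<le> n+1" using z by auto
  then show ?thesis
    using pos_of_eq_card_elems_left_of[OF assms(1)] pos_of_eq_card_elems_left_of[OF assms(2)]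
      kprofile_determines_elems_left_of_landmarks[OF assms] by simp
qed

lemma kprofile_determines_image_between_landmarks:
  assumes "fixed_perm n P" "fixed_perm n P'" "kprofile d k n P = kprofile d k n P'" "1 \<le> k" "1 \<le> n"
    and a: "a \<in> {0, 1, n, n+1}" and b: "b \<in> {0, 1, n, n+1}"
  shows "P ` {pos_of n P a<..<pos_of n P b} = P' ` {pos_of n P a<..<pos_of n P b}"
proof -
  have "a \<le> n+1" "b \<le> n+1" using a b by auto
  then show ?thesis
    using image_pos_of_interval[OF assms(1) \<open>a \<le> n+1\<close> \<open>b \<le> n+1\<close>]
      image_pos_of_interval[OF assms(2) \<open>a \<le> n+1\<close> \<open>b \<le> n+1\<close>]
      kprofile_determines_pos_of_landmarks[OF assms(1-5) a]
      kprofile_determines_pos_of_landmarks[OF assms(1-5) b]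
      kprofile_determines_elems_left_of_landmarks[OF assms(1-5) a]
      kprofile_determines_elems_left_of_landmarks[OF assms(1-5) b] by simp
qed

theorem claim8:
  fixes n k :: nat and directed :: bool
    and F :: "(nat \<times> nat \<times> (nat \<times> nat) \<times> bool option) set"
  assumes "1 \<le> n" and "1 \<le> k" and "k \<le> n + 1"
  shows "\<exists>q1 qn.
     (\<forall>P. fixed_perm n P \<and> kprofile directed k n P = F \<longrightarrow> P q1 = 1 \<and> P qn = n) \<and>
     (\<forall>P P'. fixed_perm n P \<and> kprofile directed k n P = F \<and>
             fixed_perm n P' \<and> kprofile directed k n P' = F \<longrightarrow>
        P ` {0<..<min q1 qn} = P' ` {0<..<min q1 qn} \<and>
        P ` {min q1 qn<..<max q1 qn} = P' ` {min q1 qn<..<max q1 qn} \<and>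
        P ` {max q1 qn<..<n+1} = P' ` {max q1 qn<..<n+1})"
proof (cases "\<exists>P0. fixed_perm n P0 \<and> kprofile directed k n P0 = F")
  case False
  then show ?thesis by blast
next
  case True
  then obtain P0 where P0: "fixed_perm n P0" "kprofile directed k n P0 = F" by blast
  define q1 qn where "q1 = pos_of n P0 1" and "qn = pos_of n P0 n"
  obtain l r where lr: "l \<in> {0, 1, n, n+1}" "r \<in> {0, 1, n, n+1}"
    "min q1 qn = pos_of n P0 l" "max q1 qn = pos_of n P0 r"
    unfolding q1_def qn_def by (cases "pos_of n P0 1 \<le> pos_of n P0 n") auto
  have pos_eq: "pos_of n P z = pos_of n P0 z"
    if "fixed_perm n P" "kprofile directed k n P = F" "z \<in> {0, 1, n, n+1}" for P z
    using kprofile_determines_pos_of_landmarks[of n P P0 directed k z] that P0 assms(1,2) by simp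
  have "P q1 = 1 \<and> P qn = n" if "fixed_perm n P" "kprofile directed k n P = F" for P
    using pos_eq[OF that, of 1] pos_eq[OF that, of n] P_pos_of[OF that(1), of 1]
      P_pos_of[OF that(1), of n] unfolding q1_def qn_def by simp
  moreover have "P ` {0<..<min q1 qn} = P' ` {0<..<min q1 qn} \<and>
      P ` {min q1 qn<..<max q1 qn} = P' ` {min q1 qn<..<max q1 qn} \<and>
      P ` {max q1 qn<..<n+1} = P' ` {max q1 qn<..<n+1}"
    if "fixed_perm n P" "kprofile directed k n P = F" "fixed_perm n P'" "kprofile directed k n P' = F"
    for P P'
    using kprofile_determines_image_between_landmarks[of n P P' directed k 0 l]
      kprofile_determines_image_between_landmarks[of n P P' directed k l r]
      kprofile_determines_image_between_landmarks[of n P P' directed k r "n+1"]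
      pos_eq[OF that(1,2)] lr that assms(1,2) pos_of_zero[OF that(1)] pos_of_last[OF that(1)] by simp
  ultimately show ?thesis by (intro exI[of _ q1] exI[of _ qn] conjI allI impI) (simp_all only:)
qed

end
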